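(* Let $N$ and $m=m(N)$ be positive integers such that $m = \Theta(N)$ as $N \rightarrow \infty$ and $\frac{m}{N} < \frac{1}{100}$. Place each of $m$ balls independently and uniformly at random into one of $N$ bins, and let $Z$ be the number of bins containing at least $2$ balls. Then, for $N$ large enough, \[ \mathrm{Var}[Z] = h\left(\frac{m}{N}\right)N +O(1) \geq \frac{1}{3}\left(\frac{m}{N}\right)^2 N, \] as $N \rightarrow \infty$, where $h(x) \coloneqq (1+x)e^{-x} -((1+x)^2+x^3) e^{-2x}$. *)

theory Defs
  imports "HOL-Probability.Probability" "HOL-Library.Landau_Symbols"
begin

definition balls_bins :: "nat \<Rightarrow> nat \<Rightarrow> (nat \<Rightarrow> nat) pmf" where
  "balls_bins m N = pmf_of_set (PiE {..<m} (\<lambda>_. {..<N}))"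

definition bins_ge2 :: "nat \<Rightarrow> nat \<Rightarrow> (nat \<Rightarrow> nat) \<Rightarrow> real" where
  "bins_ge2 m N f = real (card {j. j < N \<and> 2 \<le> card {i. i < m \<and> f i = j}})"

definition hfun :: "real \<Rightarrow> real" where
  "hfun x = (1 + x) * exp (- x) - ((1 + x)^2 + x^3) * exp (- 2 * x)"

end

(*
  Write Z = N - (SUM j<N. I j), where I j indicates that bin j receives at most one ball.
  Exchangeability of the I j gives Var Z = N p1 + N (N - 1) p11 - N^2 p1^2, where p1 and p11 are
  the probabilities that one, resp. two given bins receive at most one ball each; both are computed
  exactly by conditioning on the bin of the last ball.  With c = m / N one has
  p1 = (1 + c) e^(-c) + O(1/N), while the covariance p11 - p1^2 equals -c^3 e^(-2c) / N + O(1/N^2)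
  by an exact rational identity for its linearisation.  Hence Var Z = h(c) N + O(1), and the lower
  bound follows from h(c) >= 13/30 c^2 for c <= 1/100 together with c^2 N -> infinity.
*)
theory Submission
  imports Defs
begin

section \<open>Variance of an exchangeable sum\<close>

lemma sum_if_eq_else:
  fixes d c :: real
  assumes "j < n"
  shows "(\<Sum>k<n. if j = k then d else c) = d + (real n - 1) * c"
proof -
  have "(\<Sum>k<n. if j = k then d else c) = d + (\<Sum>k\<in>{..<n} - {j}. if j = k then d else c)"
    using assms by (simp add: sum.remove[of _ j])
  also have "(\<Sum>k\<in>{..<n} - {j}. if j = k then d else c) = (\<Sum>k\<in>{..<n} - {j}. c)"
    by (intro sum.cong) auto
  finally show ?thesis
    using assms by (simp add: of_nat_diff)
qed

lemma (in prob_space) variance_const_minus: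
  fixes X :: "'a \<Rightarrow> real"
  assumes "integrable M X"
  shows "variance (\<lambda>x. c - X x) = variance X"
proof -
  have "expectation (\<lambda>x. c - X x) = c - expectation X"
    using assms by (simp add: prob_space)
  then show ?thesis
    by (simp add: power2_commute)
qed

lemma variance_sum_exchangeable:
  fixes p :: "'a pmf" and X :: "nat \<Rightarrow> 'a \<Rightarrow> real"
  assumes "finite (set_pmf p)"
    and mean: "\<And>j. j < n \<Longrightarrow> measure_pmf.expectation p (X j) = e"
    and second: "\<And>j k. j < n \<Longrightarrow> k < n \<Longrightarrow>
      measure_pmf.expectation p (\<lambda>x. X j x * X k x) = (if j = k then d else c)"
  shows "measure_pmf.variance p (\<lambda>x. \<Sum>j<n. X j x) = real n * d + real n * (real n - 1) * c - real n ^ 2 * e^2"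
proof -
  have int: "integrable p f" for f :: "'a \<Rightarrow> real"
    by (rule integrable_measure_pmf_finite[OF assms(1)])
  have "measure_pmf.expectation p (\<lambda>x. \<Sum>j<n. X j x) = n * e"
    by (simp add: int mean)
  moreover have "measure_pmf.expectation p (\<lambda>x. (\<Sum>j<n. X j x)^2) = (\<Sum>j<n. \<Sum>k<n. if j = k then d else c)"
    by (simp add: power2_eq_square sum_product int second)
  moreover have "(\<Sum>j<n. \<Sum>k<n. if j = k then d else c) = (\<Sum>j<n. d + (real n - 1) * c)"
    by (intro sum.cong) (simp_all add: sum_if_eq_else)
  ultimately show ?thesis
    by (simp add: measure_pmf.variance_eq int algebra_simps power2_eq_square)
qed

section \<open>Bin loads\<close>

definition load :: "nat \<Rightarrow> (nat \<Rightarrow> nat) \<Rightarrow> nat \<Rightarrow> nat" where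
  "load m f j = card {i. i < m \<and> f i = j}"

abbreviation assignments :: "nat \<Rightarrow> nat \<Rightarrow> (nat \<Rightarrow> nat) set" where
  "assignments m N \<equiv> PiE {..<m} (\<lambda>_. {..<N})"

lemma load_0 [simp]: "load 0 f j = 0"
  by (simp add: load_def)

lemma load_fun_upd: "load (Suc m) (f(m := y)) j = load m f j + of_bool (y = j)"
proof -
  have "{i. i < Suc m \<and> (f(m := y)) i = j} = {i. i < m \<and> f i = j} \<union> (if y = j then {m} else {})"
    by (auto simp: less_Suc_eq)
  then show ?thesis
    by (simp add: load_def card_insert_if)
qed

lemma sum_assignments_Suc:
  "(\<Sum>f\<in>assignments (Suc m) N. g f) = (\<Sum>y<N. \<Sum>f\<in>assignments m N. g (f(m := y)))"
proof -
  have "assignments (Suc m) N = (\<lambda>(y, f). f(m := y)) ` ({..<N} \<times> assignments m N)"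
    by (simp add: lessThan_Suc PiE_insert_eq)
  moreover have "inj_on (\<lambda>(y, f). f(m := y)) ({..<N} \<times> assignments m N)"
    by (rule inj_combinator) simp
  ultimately show ?thesis
    by (simp add: sum.reindex sum.cartesian_product prod.case_distrib)
qed

lemma sum_two_loads_Suc:
  fixes F :: "nat \<Rightarrow> nat \<Rightarrow> real"
  assumes "j < N" "k < N" "j \<noteq> k"
  shows "(\<Sum>f\<in>assignments (Suc m) N. F (load (Suc m) f j) (load (Suc m) f k)) =
    (\<Sum>f\<in>assignments m N. F (load m f j + 1) (load m f k))
    + (\<Sum>f\<in>assignments m N. F (load m f j) (load m f k + 1))
    + (real N - 2) * (\<Sum>f\<in>assignments m N. F (load m f j) (load m f k))"
proof -
  define G where "G y = (\<Sum>f\<in>assignments m N. F (load m f j + of_bool (y = j)) (load m f k + of_bool (y = k)))" for y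
  have "(\<Sum>f\<in>assignments (Suc m) N. F (load (Suc m) f j) (load (Suc m) f k)) = (\<Sum>y<N. G y)"
    by (simp add: sum_assignments_Suc load_fun_upd G_def)
  also have "\<dots> = G j + (\<Sum>y\<in>{..<N} - {j}. G y)"
    using assms by (simp add: sum.remove)
  also have "(\<Sum>y\<in>{..<N} - {j}. G y) = G k + (\<Sum>y\<in>{..<N} - {j} - {k}. G y)"
    using assms by (simp add: sum.remove)
  also have "(\<Sum>y\<in>{..<N} - {j} - {k}. G y) = (\<Sum>y\<in>{..<N} - {j} - {k}. G N)"
    using assms by (intro sum.cong) (auto simp: G_def)
  also have "\<dots> = (real N - 2) * G N"
    using assms by (simp add: card_Diff_singleton_if of_nat_diff)
  finally show ?thesis
    using assms by (simp add: G_def)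
qed

lemma sum_load_Suc:
  fixes F :: "nat \<Rightarrow> real"
  assumes "j < N" "2 \<le> N"
  shows "(\<Sum>f\<in>assignments (Suc m) N. F (load (Suc m) f j)) =
    (\<Sum>f\<in>assignments m N. F (load m f j + 1)) + (real N - 1) * (\<Sum>f\<in>assignments m N. F (load m f j))"
proof -
  define k :: nat where "k = (if j = 0 then 1 else 0)"
  have k: "k < N" "j \<noteq> k"
    using assms by (auto simp: k_def)
  show ?thesis
    using sum_two_loads_Suc[OF assms(1) k, of "\<lambda>a b. F a"] by (simp add: algebra_simps)
qed

lemma sum_load_eq_0:
  assumes "j < N" "2 \<le> N"
  shows "(\<Sum>f\<in>assignments m N. of_bool (load m f j = 0)) = (real N - 1) ^ m"
  by (induction m) (simp_all add: sum_load_Suc[OF assms, where F = "\<lambda>a. of_bool (a = 0)"])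

lemma sum_load_le_1:
  assumes "j < N" "2 \<le> N"
  shows "(\<Sum>f\<in>assignments m N. of_bool (load m f j \<le> 1)) = (real N - 1) ^ m * (1 + m / (real N - 1))"
proof (induction m)
  case (Suc m)
  have "(\<Sum>f\<in>assignments m N. of_bool (load m f j + 1 \<le> 1)) = (real N - 1) ^ m"
    using sum_load_eq_0[OF assms] by simp
  then show ?case
    using assms
    by (simp only: sum_load_Suc[OF assms, where F = "\<lambda>a. of_bool (a \<le> 1)"] Suc.IH)
      (simp add: field_simps)
qed simp

lemma sum_loads_eq_0:
  assumes "j < N" "k < N" "j \<noteq> k"
  shows "(\<Sum>f\<in>assignments m N. of_bool (load m f j = 0 \<and> load m f k = 0)) = (real N - 2) ^ m"
  by (induction m) (simp_all add: sum_two_loads_Suc[OF assms, where F = "\<lambda>a b. of_bool (a = 0 \<and> b = 0)"])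

lemma sum_loads_le_1_eq_0:
  assumes "j < N" "k < N" "j \<noteq> k" "3 \<le> N"
  shows "(\<Sum>f\<in>assignments m N. of_bool (load m f j \<le> 1 \<and> load m f k = 0)) =
    (real N - 2) ^ m * (1 + m / (real N - 2))"
proof (induction m)
  case (Suc m)
  have "(\<Sum>f\<in>assignments m N. of_bool (load m f j + 1 \<le> 1 \<and> load m f k = 0)) = (real N - 2) ^ m"
    using sum_loads_eq_0[OF assms(1-3)] by simp
  moreover have "(\<Sum>f\<in>assignments m N. of_bool (load m f j \<le> 1 \<and> load m f k + 1 = 0)) = 0"
    by simp
  ultimately show ?case
    using assms
    by (simp only: sum_two_loads_Suc[OF assms(1-3), where F = "\<lambda>a b. of_bool (a \<le> 1 \<and> b = 0)"] Suc.IH)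
      (simp add: field_simps)
qed simp

lemma sum_loads_le_1:
  assumes "j < N" "k < N" "j \<noteq> k" "3 \<le> N"
  shows "(\<Sum>f\<in>assignments m N. of_bool (load m f j \<le> 1 \<and> load m f k \<le> 1)) =
    (real N - 2) ^ m * (1 + 2 * real m / (real N - 2) + real m * (real m - 1) / (real N - 2)^2)"
proof (induction m)
  case (Suc m)
  define q where "q = real N - 2"
  have "q > 0"
    using assms by (simp add: q_def)
  have "(\<Sum>f\<in>assignments m N. of_bool (load m f j + 1 \<le> 1 \<and> load m f k \<le> 1)) = q ^ m * (1 + m / q)"
    using sum_loads_le_1_eq_0[of k N j m] assms by (simp add: q_def conj_commute)
  moreover have "(\<Sum>f\<in>assignments m N. of_bool (load m f j \<le> 1 \<and> load m f k + 1 \<le> 1)) = q ^ m * (1 + m / q)"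
    using sum_loads_le_1_eq_0[OF assms] by (simp add: q_def)
  ultimately have "(\<Sum>f\<in>assignments (Suc m) N. of_bool (load (Suc m) f j \<le> 1 \<and> load (Suc m) f k \<le> 1)) =
      2 * (q ^ m * (1 + m / q)) + q * (q ^ m * (1 + 2 * real m / q + real m * (real m - 1) / q^2))"
    unfolding sum_two_loads_Suc[OF assms(1-3), where F = "\<lambda>a b. of_bool (a \<le> 1 \<and> b \<le> 1)"] Suc.IH
    by (simp add: q_def)
  also have "\<dots> = q ^ Suc m * (1 + 2 * real (Suc m) / q + real (Suc m) * (real (Suc m) - 1) / q^2)"
    using \<open>q > 0\<close> by (simp add: field_simps power2_eq_square)
  finally show ?case
    by (simp add: q_def)
qed simp

section \<open>The exact variance\<close>

(* A fixed bin receives no ball or exactly one: (1 - 1/n)^m + m (1/n) (1 - 1/n)^(m - 1).  For two fixed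
   bins the loads (0, 0), (1, 0) or (0, 1), and (1, 1) give the three summands of prob_two_bins_le_1. *)
definition prob_bin_le_1 :: "nat \<Rightarrow> real \<Rightarrow> real" where
  "prob_bin_le_1 m n = (1 - 1 / n) ^ m * (1 + m / (n - 1))"

definition prob_two_bins_le_1 :: "nat \<Rightarrow> real \<Rightarrow> real" where
  "prob_two_bins_le_1 m n = (1 - 2 / n) ^ m * (1 + 2 * real m / (n - 2) + real m * (real m - 1) / (n - 2)^2)"

lemma assignments_nonempty: "0 < N \<Longrightarrow> assignments m N \<noteq> {}"
  by (simp add: PiE_eq_empty_iff lessThan_empty_iff)

lemma set_pmf_balls_bins: "0 < N \<Longrightarrow> set_pmf (balls_bins m N) = assignments m N"
  by (simp add: balls_bins_def finite_PiE assignments_nonempty)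

lemma expectation_balls_bins:
  assumes "0 < N"
  shows "measure_pmf.expectation (balls_bins m N) g = (\<Sum>f\<in>assignments m N. g f) / real N ^ m"
  using assms by (simp add: balls_bins_def integral_pmf_of_set finite_PiE assignments_nonempty card_PiE)

lemma expectation_load_le_1:
  assumes "j < N" "2 \<le> N"
  shows "measure_pmf.expectation (balls_bins m N) (\<lambda>f. of_bool (load m f j \<le> 1)) = prob_bin_le_1 m N"
proof -
  have "1 - 1 / real N = (real N - 1) / real N"
    using assms by (simp add: field_simps)
  then have "(1 - 1 / real N) ^ m * x = (real N - 1) ^ m * x / real N ^ m" for x
    by (simp add: power_divide)
  then show ?thesis
    using assms sum_load_le_1[OF assms, of m] by (simp add: expectation_balls_bins prob_bin_le_1_def)
qed

lemma expectation_loads_le_1: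
  assumes "j < N" "k < N" "j \<noteq> k" "3 \<le> N"
  shows "measure_pmf.expectation (balls_bins m N) (\<lambda>f. of_bool (load m f j \<le> 1 \<and> load m f k \<le> 1)) =
    prob_two_bins_le_1 m N"
proof -
  have "1 - 2 / real N = (real N - 2) / real N"
    using assms by (simp add: field_simps)
  then have "(1 - 2 / real N) ^ m * x = (real N - 2) ^ m * x / real N ^ m" for x
    by (simp add: power_divide)
  then show ?thesis
    using assms sum_loads_le_1[OF assms, of m] by (simp add: expectation_balls_bins prob_two_bins_le_1_def)
qed

lemma bins_ge2_eq: "bins_ge2 m N f = real N - (\<Sum>j<N. of_bool (load m f j \<le> 1))"
proof -
  have "bins_ge2 m N f = (\<Sum>j<N. of_bool (2 \<le> load m f j))"
    by (simp add: bins_ge2_def load_def lessThan_def Collect_conj_eq)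
  also have "\<dots> = (\<Sum>j<N. 1 - of_bool (load m f j \<le> 1))"
    by (intro sum.cong) auto
  finally show ?thesis
    by (simp add: sum_subtractf)
qed

lemma variance_bins_ge2:
  assumes "3 \<le> N"
  shows "measure_pmf.variance (balls_bins m N) (bins_ge2 m N) =
    real N * prob_bin_le_1 m N + real N * (real N - 1) * prob_two_bins_le_1 m N
      - real N ^ 2 * prob_bin_le_1 m N ^ 2"
proof -
  have "finite (set_pmf (balls_bins m N))"
    using assms by (simp add: set_pmf_balls_bins finite_PiE)
  moreover have "measure_pmf.expectation (balls_bins m N) (\<lambda>f. of_bool (load m f j \<le> 1) * of_bool (load m f k \<le> 1)) =
    (if j = k then prob_bin_le_1 m N else prob_two_bins_le_1 m N)" if "j < N" "k < N" for j k
    using that assms expectation_load_le_1[of j N m] expectation_loads_le_1[of j N k m]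
    by (cases "j = k") (simp_all flip: of_bool_conj)
  ultimately have "measure_pmf.variance (balls_bins m N) (\<lambda>f. \<Sum>j<N. of_bool (load m f j \<le> 1)) =
    real N * prob_bin_le_1 m N + real N * (real N - 1) * prob_two_bins_le_1 m N
      - real N ^ 2 * prob_bin_le_1 m N ^ 2"
    using assms expectation_load_le_1[of _ N m] by (intro variance_sum_exchangeable) auto
  moreover have "integrable (balls_bins m N) (\<lambda>f. \<Sum>j<N. of_bool (load m f j \<le> 1) :: real)"
    using \<open>finite (set_pmf (balls_bins m N))\<close> by (rule integrable_measure_pmf_finite)
  ultimately show ?thesis
    unfolding bins_ge2_eq[abs_def] by (simp only: measure_pmf.variance_const_minus)
qed

section \<open>Asymptotics of the variance formula\<close>

lemma exp_minus_power_one_minus_bounds: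
  fixes n :: real
  assumes "2 \<le> n"
  shows "0 \<le> exp (- (m / n)) - (1 - 1 / n) ^ m \<and> exp (- (m / n)) - (1 - 1 / n) ^ m \<le> 2 * m / n^2"
proof -
  have pow: "(1 - 1 / n) ^ m = exp (m * ln (1 - 1 / n))"
    using assms by (simp add: exp_of_nat_mult)
  have "ln (1 - 1 / n) \<le> - (1 / n)"
    using assms by (intro ln_one_minus_pos_upper_bound) auto
  then have "m * ln (1 - 1 / n) \<le> m * (- (1 / n))"
    by (rule mult_left_mono) simp
  then have upper: "(1 - 1 / n) ^ m \<le> exp (- (m / n))"
    unfolding pow by simp
  have "- (1 / n) - 2 * (1 / n)^2 \<le> ln (1 - 1 / n)"
    using assms by (intro ln_one_minus_pos_lower_bound) auto
  then have "m * (- (1 / n) - 2 * (1 / n)^2) \<le> m * ln (1 - 1 / n)"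
    by (rule mult_left_mono) simp
  then have "exp (- (m / n) - 2 * m / n^2) \<le> (1 - 1 / n) ^ m"
    unfolding pow by (simp add: algebra_simps power2_eq_square)
  then have "exp (- (m / n)) * exp (- (2 * m / n^2)) \<le> (1 - 1 / n) ^ m"
    by (simp add: exp_add[symmetric])
  moreover have "exp (- (m / n)) * (1 - exp (- (2 * m / n^2))) \<le> 1 * (2 * m / n^2)"
    using exp_ge_add_one_self[of "- (2 * m / n^2)"] assms by (intro mult_mono) auto
  ultimately show ?thesis
    using upper by (simp add: algebra_simps)
qed

lemma exp_minus_power_one_minus_le:
  fixes n :: real
  assumes "4 \<le> n" "real m \<le> n"
  shows "exp (- (m / n)) - (1 - 1 / n) ^ m \<le> 2 / n"
proof -
  have "exp (- (m / n)) - (1 - 1 / n) ^ m \<le> 2 * m / n^2"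
    using exp_minus_power_one_minus_bounds[of n m] assms by simp
  also have "\<dots> \<le> 2 * n / n^2"
    using assms by (intro divide_right_mono) auto
  also have "\<dots> = 2 / n"
    by (simp add: power2_eq_square)
  finally show ?thesis .
qed

lemma exp_minus_square_approx:
  fixes n :: real
  assumes "4 \<le> n" "real m \<le> n"
  shows "0 \<le> n * (exp (- (m / n))^2 - ((1 - 1 / n) ^ m)^2) \<and> n * (exp (- (m / n))^2 - ((1 - 1 / n) ^ m)^2) \<le> 4"
proof -
  define u where "u = (1 - 1 / n) ^ m"
  define v where "v = exp (- (m / n))"
  have "0 \<le> u" "u \<le> 1" "v \<le> 1"
    using assms by (auto simp: u_def v_def power_le_one)
  moreover have "0 \<le> v - u" "v - u \<le> 2 / n"
    using exp_minus_power_one_minus_bounds[of n m] exp_minus_power_one_minus_le[OF assms] assms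
    by (simp_all add: u_def v_def)
  ultimately have "n * (v - u) * (v + u) \<le> n * (2 / n) * 2" "0 \<le> n * (v - u) * (v + u)"
    using assms by (intro mult_mono, auto)
  moreover have "n * (v^2 - u^2) = n * (v - u) * (v + u)"
    by (simp add: algebra_simps power2_eq_square)
  ultimately show ?thesis
    using assms by (simp add: u_def v_def)
qed

lemma prob_bin_le_1_approx:
  fixes n :: real
  assumes "4 \<le> n" "real m \<le> n"
  shows "\<bar>prob_bin_le_1 m n - (1 + m / n) * exp (- (m / n))\<bar> \<le> 6 / n"
proof -
  define u where "u = (1 - 1 / n) ^ m"
  define v where "v = exp (- (m / n))"
  define B where "B = 1 + m / (n - 1)"
  have "m / (n - 1) = m / n + m / ((n - 1) * n)"
    using assms by (simp add: field_simps)
  then have eq: "prob_bin_le_1 m n - (1 + m / n) * v = v * (m / ((n - 1) * n)) - (v - u) * B"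
    unfolding prob_bin_le_1_def u_def[symmetric] B_def by (simp only:) (simp add: algebra_simps diff_divide_distrib)
  have "m / ((n - 1) * n) \<le> n / ((n - 1) * n)"
    using assms by (intro divide_right_mono) auto
  also have "\<dots> \<le> 2 / n"
    using assms by (simp add: field_simps)
  finally have shift: "v * (m / ((n - 1) * n)) \<le> 2 / n" "0 \<le> v * (m / ((n - 1) * n))"
    using mult_mono[of v 1 "m / ((n - 1) * n)" "2 / n"] assms by (auto simp: v_def)
  have "v - u \<le> 2 / n"
    using exp_minus_power_one_minus_le[OF assms] by (simp add: v_def u_def)
  then have "(v - u) * B \<le> (2 / n) * 3"
    using exp_minus_power_one_minus_bounds[of n m] assms
    by (intro mult_mono) (auto simp: v_def u_def B_def field_simps)
  moreover have "0 \<le> (v - u) * B"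
    using exp_minus_power_one_minus_bounds[of n m] assms by (simp add: v_def u_def B_def)
  ultimately show ?thesis
    using shift assms unfolding v_def[symmetric] eq by (simp add: abs_le_iff)
qed

lemma prob_bin_le_1_variance_approx:
  fixes n :: real and m :: nat
  defines "w \<equiv> (1 + m / n) * exp (- (m / n))"
  assumes "4 \<le> n" "real m \<le> n"
  shows "\<bar>n * (prob_bin_le_1 m n * (1 - prob_bin_le_1 m n) - w * (1 - w))\<bar> \<le> 24"
proof -
  define p where "p = prob_bin_le_1 m n"
  have "\<bar>p - w\<bar> \<le> 6 / n"
    using prob_bin_le_1_approx[OF assms(2,3)] by (simp add: p_def w_def)
  have "1 \<le> 1 + m / (n - 1)" "1 + m / (n - 1) \<le> 3"
    using assms by (auto simp: field_simps)
  moreover have "0 \<le> (1 - 1 / n) ^ m" "(1 - 1 / n) ^ m \<le> 1"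
    using assms by (auto simp: power_le_one)
  ultimately have "0 \<le> p" "p \<le> 1 * 3"
    unfolding p_def prob_bin_le_1_def by (simp, intro mult_mono) auto
  moreover have "0 \<le> w" "w \<le> 2 * 1"
    unfolding w_def using assms by (simp, intro mult_mono) auto
  ultimately have "\<bar>1 - p - w\<bar> \<le> 4"
    by simp
  have "n * (p * (1 - p) - w * (1 - w)) = n * (p - w) * (1 - p - w)"
    by (simp add: algebra_simps)
  then have "\<bar>n * (p * (1 - p) - w * (1 - w))\<bar> = n * \<bar>p - w\<bar> * \<bar>1 - p - w\<bar>"
    using \<open>4 \<le> n\<close> by (simp add: abs_mult)
  also have "\<dots> \<le> n * (6 / n) * 4"
    using assms \<open>\<bar>p - w\<bar> \<le> 6 / n\<close> \<open>\<bar>1 - p - w\<bar> \<le> 4\<close> by (intro mult_mono) auto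
  finally show ?thesis
    using assms by (simp add: p_def)
qed

lemma one_minus_power_le_second_order:
  fixes t :: real
  assumes "0 \<le> t" "t \<le> 1"
  shows "(1 - t) ^ m \<le> 1 - m * t + (m * t)^2 / 2"
proof (induction m)
  case (Suc m)
  have "(1 - t) ^ Suc m \<le> (1 - t) * (1 - m * t + (m * t)^2 / 2)"
    using Suc assms by (simp add: mult_left_mono)
  also have "\<dots> \<le> 1 - Suc m * t + (Suc m * t)^2 / 2"
    using assms by (simp add: algebra_simps power2_eq_square power3_eq_cube)
  finally show ?case .
qed simp

lemma one_minus_two_div_eq:
  fixes n :: real
  assumes "n \<noteq> 0" "n \<noteq> 1"
  shows "1 - 2 / n = (1 - 1 / n)^2 * (1 - 1 / (n - 1)^2)"
proof -
  have "n - 1 \<noteq> 0"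
    using assms by simp
  with assms show ?thesis
    by (simp add: field_simps) (simp add: power2_eq_square power4_eq_xxxx algebra_simps)
qed

lemma prob_two_bins_le_1_minus_square:
  fixes n :: real
  assumes "n \<noteq> 0" "n \<noteq> 1"
  shows "prob_two_bins_le_1 m n - prob_bin_le_1 m n ^ 2 = ((1 - 1 / n) ^ m)^2 *
    ((1 - 1 / (n - 1)^2) ^ m * (1 + 2 * m / (n - 2) + real m * (real m - 1) / (n - 2)^2) - (1 + m / (n - 1))^2)"
proof -
  have "(1 - 2 / n) ^ m = ((1 - 1 / n)^2) ^ m * (1 - 1 / (n - 1)^2) ^ m"
    using assms by (simp add: one_minus_two_div_eq power_mult_distrib)
  also have "((1 - 1 / n)^2) ^ m = ((1 - 1 / n) ^ m)^2"
    by (simp add: mult.commute flip: power_mult)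
  finally show ?thesis
    unfolding prob_two_bins_le_1_def prob_bin_le_1_def by (simp only: power_mult_distrib) (simp add: algebra_simps)
qed

(* Here 1 - x/(n-1)^2 linearises (1 - 1/(n-1)^2)^m.  Once the leading term -(x/n)^3/n is removed,
   the numerator over n^4 (n-1)^2 (n-2)^2 has degree only 6 in n (for x <= n), whence O(1/n^2). *)
lemma linearized_covariance_factor_eq:
  fixes n x :: real
  assumes "n \<noteq> 0" "n - 1 \<noteq> 0" "n - 2 \<noteq> 0"
  shows "((1 - x / (n - 1)^2) * (1 + 2 * x / (n - 2) + x * (x - 1) / (n - 2)^2) - (1 + x / (n - 1))^2 + (x / n)^3 / n)
      * (n^4 * (n - 1)^2 * (n - 2)^2)
    = n^4 * (x * (2 * x - 1)) + x^3 * (2 - 3 * n) * (2 * n^2 - 3 * n + 2)"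
proof -
  define a where "a = n - 1"
  define b where "b = n - 2"
  have "a \<noteq> 0" "b \<noteq> 0"
    using assms by (simp_all add: a_def b_def)
  then have "((1 - x / a^2) * (1 + 2 * x / b + x * (x - 1) / b^2) - (1 + x / a)^2 + (x / n)^3 / n) * (n^4 * a^2 * b^2)
    = ((a^2 - x) * (b^2 + 2 * x * b + x * (x - 1)) - (a + x)^2 * b^2) * n^4 + x^3 * a^2 * b^2"
    using assms by (simp add: field_simps power2_eq_square power3_eq_cube power4_eq_xxxx)
  also have "\<dots> = n^4 * (x * (2 * x - 1)) + x^3 * (2 - 3 * n) * (2 * n^2 - 3 * n + 2)"
    unfolding a_def b_def by algebra
  finally show ?thesis
    by (simp add: a_def b_def)
qed

lemma linearized_covariance_numerator_bound:
  fixes n x :: real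
  assumes "4 \<le> n" "0 \<le> x" "x \<le> n"
  shows "\<bar>n^4 * (x * (2 * x - 1)) + x^3 * (2 - 3 * n) * (2 * n^2 - 3 * n + 2)\<bar> \<le> 8 * n^6"
proof -
  have "\<bar>x * (2 * x - 1)\<bar> \<le> n * (2 * n)"
    unfolding abs_mult using assms by (intro mult_mono) auto
  then have "\<bar>n^4 * (x * (2 * x - 1))\<bar> \<le> n^4 * (n * (2 * n))"
    unfolding abs_mult using assms by (intro mult_mono) auto
  moreover have "0 \<le> 2 * n^2 - 3 * n + 2"
    using assms by (simp add: power2_eq_square)
  then have "\<bar>x^3 * (2 - 3 * n) * (2 * n^2 - 3 * n + 2)\<bar> \<le> n^3 * (3 * n) * (2 * n^2)"
    unfolding abs_mult using assms by (intro mult_mono power_mono) auto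
  ultimately have "\<bar>n^4 * (x * (2 * x - 1)) + x^3 * (2 - 3 * n) * (2 * n^2 - 3 * n + 2)\<bar>
      \<le> n^4 * (n * (2 * n)) + n^3 * (3 * n) * (2 * n^2)"
    by (rule order.trans[OF abs_triangle_ineq add_mono])
  also have "\<dots> = 8 * n^6"
    by (simp add: eval_nat_numeral algebra_simps)
  finally show ?thesis .
qed

lemma linearized_covariance_factor_bound:
  fixes n x :: real
  assumes "4 \<le> n" "0 \<le> x" "x \<le> n"
  shows "\<bar>(1 - x / (n - 1)^2) * (1 + 2 * x / (n - 2) + x * (x - 1) / (n - 2)^2) - (1 + x / (n - 1))^2
      + (x / n)^3 / n\<bar> \<le> 128 / n^2"
    (is "\<bar>?Y\<bar> \<le> _")
proof -
  define Q where "Q = n^4 * (n - 1)^2 * (n - 2)^2"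
  have "(n / 2)^2 \<le> (n - 1)^2" "(n / 2)^2 \<le> (n - 2)^2"
    using assms by (auto intro: power_mono)
  then have "n^4 * (n / 2)^2 * (n / 2)^2 \<le> Q"
    unfolding Q_def by (intro mult_mono) auto
  moreover have "n^4 * (n / 2)^2 * (n / 2)^2 = n^8 / 16"
    by (simp add: eval_nat_numeral field_simps)
  ultimately have "\<bar>?Y\<bar> * (n^8 / 16) \<le> \<bar>?Y\<bar> * Q"
    by (intro mult_left_mono) auto
  also have "\<dots> = \<bar>n^4 * (x * (2 * x - 1)) + x^3 * (2 - 3 * n) * (2 * n^2 - 3 * n + 2)\<bar>"
    unfolding Q_def using assms by (simp add: abs_mult linearized_covariance_factor_eq[symmetric])
  also have "\<dots> \<le> 8 * n^6"
    using assms by (rule linearized_covariance_numerator_bound)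
  finally have "\<bar>?Y\<bar> \<le> 8 * n^6 / (n^8 / 16)"
    using assms by (intro pos_le_divide_eq[THEN iffD2]) simp_all
  also have "\<dots> = 128 / n^2"
    using assms by (simp add: eval_nat_numeral field_simps)
  finally show ?thesis .
qed

lemma two_bins_le_1_factor_bounds:
  fixes n :: real
  assumes "4 \<le> n" "real m \<le> n"
  shows "0 \<le> 1 + 2 * m / (n - 2) + real m * (real m - 1) / (n - 2)^2
    \<and> 1 + 2 * m / (n - 2) + real m * (real m - 1) / (n - 2)^2 \<le> 9"
proof -
  have "m / (n - 2) \<le> 2"
    using assms by (simp add: field_simps)
  moreover have "real m * (real m - 1) / (n - 2)^2 \<le> real m * real m / (n - 2)^2"
    by (intro divide_right_mono mult_left_mono) auto
  moreover have "real m * real m / (n - 2)^2 = (m / (n - 2))^2"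
    by (simp add: power2_eq_square)
  moreover have "(m / (n - 2))^2 \<le> 2^2"
    using assms \<open>m / (n - 2) \<le> 2\<close> by (intro power_mono) auto
  moreover have "0 \<le> real m * (real m - 1)"
    by (cases m) auto
  ultimately show ?thesis
    using assms by auto
qed

lemma covariance_factor_approx:
  fixes n :: real
  assumes "4 \<le> n" "real m \<le> n"
  shows "\<bar>(1 - 1 / (n - 1)^2) ^ m * (1 + 2 * m / (n - 2) + real m * (real m - 1) / (n - 2)^2) - (1 + m / (n - 1))^2
      + (m / n)^3 / n\<bar> \<le> 200 / n^2"
proof -
  define t where "t = 1 / (n - 1)^2"
  define A where "A = 1 + 2 * m / (n - 2) + real m * (real m - 1) / (n - 2)^2"
  define R where "R = (1 - t) ^ m - (1 - m * t)"
  have "1 \<le> (n - 1)^2"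
    using assms by (simp add: one_le_power)
  then have t: "0 \<le> t" "t \<le> 1"
    by (auto simp: t_def divide_le_eq_1)
  have "m * t \<le> n / (n / 2)^2"
    unfolding t_def using assms by (auto intro!: frac_le power_mono)
  also have "\<dots> = 4 / n"
    by (simp add: power2_eq_square)
  finally have "(m * t)^2 \<le> (4 / n)^2"
    using t by (intro power_mono) auto
  then have "0 \<le> R" "R \<le> 8 / n^2"
    using Bernoulli_inequality[of "- t" m] one_minus_power_le_second_order[OF t, of m] t
    by (auto simp: R_def power_divide)
  moreover have "0 \<le> A" "A \<le> 9"
    using two_bins_le_1_factor_bounds[OF assms] by (simp_all add: A_def)
  ultimately have "\<bar>R * A\<bar> \<le> 8 / n^2 * 9"
    unfolding abs_mult by (intro mult_mono) auto
  moreover have "\<bar>(1 - m * t) * A - (1 + m / (n - 1))^2 + (m / n)^3 / n\<bar> \<le> 128 / n^2"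
    unfolding t_def A_def using linearized_covariance_factor_bound[of n "real m"] assms by simp
  moreover have "(1 - t) ^ m * A - (1 + m / (n - 1))^2 + (m / n)^3 / n =
      R * A + ((1 - m * t) * A - (1 + m / (n - 1))^2 + (m / n)^3 / n)"
    by (simp add: R_def algebra_simps)
  ultimately have "\<bar>(1 - t) ^ m * A - (1 + m / (n - 1))^2 + (m / n)^3 / n\<bar> \<le> 8 / n^2 * 9 + 128 / n^2"
    using abs_triangle_ineq[of "R * A" "(1 - m * t) * A - (1 + m / (n - 1))^2 + (m / n)^3 / n"] by linarith
  then show ?thesis
    by (simp add: t_def A_def)
qed

lemma covariance_sum_approx:
  fixes n :: real
  assumes "4 \<le> n" "real m \<le> n"
  shows "\<bar>n * (n - 1) * (prob_two_bins_le_1 m n - prob_bin_le_1 m n ^ 2) + n * (m / n)^3 * exp (- (m / n))^2\<bar>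
    \<le> 205"
proof -
  define c where "c = m / n"
  define u where "u = (1 - 1 / n) ^ m"
  define v where "v = exp (- c)"
  define X where "X = (1 - 1 / (n - 1)^2) ^ m * (1 + 2 * m / (n - 2) + real m * (real m - 1) / (n - 2)^2)
    - (1 + m / (n - 1))^2"
  have "0 \<le> u" "u \<le> 1" "0 \<le> c" "c \<le> 1"
    using assms by (auto simp: u_def c_def power_le_one)
  have eq: "n * (n - 1) * (prob_two_bins_le_1 m n - prob_bin_le_1 m n ^ 2) + n * c^3 * v^2 =
      n * (n - 1) * u^2 * (X + c^3 / n) + c^3 * (n * (v^2 - u^2) + u^2)"
    using assms by (simp add: prob_two_bins_le_1_minus_square u_def X_def field_simps)
  have "n * (n - 1) * u^2 \<le> n^2 * 1"
    using assms \<open>0 \<le> u\<close> \<open>u \<le> 1\<close> by (intro mult_mono) (auto simp: power2_eq_square mult_le_one)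
  then have "\<bar>n * (n - 1) * u^2 * (X + c^3 / n)\<bar> \<le> n^2 * (200 / n^2)"
    using covariance_factor_approx[OF assms] assms unfolding abs_mult
    by (intro mult_mono) (auto simp: X_def c_def)
  then have factor_term: "\<bar>n * (n - 1) * u^2 * (X + c^3 / n)\<bar> \<le> 200"
    using assms by simp
  have "0 \<le> n * (v^2 - u^2)" "n * (v^2 - u^2) \<le> 4"
    using exp_minus_square_approx[OF assms] by (simp_all add: u_def v_def c_def)
  moreover have "u^2 \<le> 1" "c^3 \<le> 1"
    using \<open>0 \<le> u\<close> \<open>u \<le> 1\<close> \<open>0 \<le> c\<close> \<open>c \<le> 1\<close> by (simp_all add: power_le_one)
  ultimately have "\<bar>c^3 * (n * (v^2 - u^2) + u^2)\<bar> \<le> 1 * 5"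
    using \<open>0 \<le> c\<close> unfolding abs_mult by (intro mult_mono) auto
  then have exp_term: "\<bar>c^3 * (n * (v^2 - u^2) + u^2)\<bar> \<le> 5"
    by simp
  have "\<bar>n * (n - 1) * (prob_two_bins_le_1 m n - prob_bin_le_1 m n ^ 2) + n * c^3 * v^2\<bar> \<le> 200 + 5"
    unfolding eq by (rule order.trans[OF abs_triangle_ineq add_mono[OF factor_term exp_term]])
  then show ?thesis
    by (simp add: c_def v_def)
qed

lemma variance_formula_approx:
  fixes n :: real
  assumes "4 \<le> n" "real m \<le> n"
  shows "\<bar>n * prob_bin_le_1 m n + n * (n - 1) * prob_two_bins_le_1 m n - n^2 * prob_bin_le_1 m n ^ 2
      - hfun (m / n) * n\<bar> \<le> 300"
proof -
  define p where "p = prob_bin_le_1 m n"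
  define v where "v = exp (- (m / n))"
  define w where "w = (1 + m / n) * v"
  have h: "hfun (m / n) = w * (1 - w) - (m / n)^3 * v^2"
    by (simp add: hfun_def w_def v_def power2_eq_square algebra_simps flip: exp_add)
  have "n * p + n * (n - 1) * prob_two_bins_le_1 m n - n^2 * p^2 - hfun (m / n) * n =
      n * (p * (1 - p) - w * (1 - w)) + (n * (n - 1) * (prob_two_bins_le_1 m n - p^2) + n * (m / n)^3 * v^2)"
    unfolding h by (simp add: algebra_simps power2_eq_square)
  then show ?thesis
    using prob_bin_le_1_variance_approx[OF assms] covariance_sum_approx[OF assms]
    unfolding p_def w_def v_def by linarith
qed

lemma hfun_lower_bound:
  fixes c :: real
  assumes "0 \<le> c" "c \<le> 1 / 100"
  shows "13 / 30 * c^2 \<le> hfun c"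
proof -
  define y where "y = exp c"
  have "0 < y"
    by (simp add: y_def)
  have inv: "exp (- c) = inverse y" "exp (- 2 * c) = inverse (y^2)"
    by (simp_all add: y_def power2_eq_square exp_minus flip: exp_add)
  have "hfun c * y^2 = (1 + c) * y - ((1 + c)^2 + c^3)"
    unfolding hfun_def inv using \<open>0 < y\<close> by (simp add: field_simps power2_eq_square)
  also have "\<dots> \<ge> 99 / 200 * c^2"
  proof -
    have "(1 + c) * (1 + c + c^2 / 2) \<le> (1 + c) * y"
      unfolding y_def using assms by (intro mult_left_mono exp_lower_Taylor_quadratic) auto
    moreover have "c^3 \<le> c^2 / 100"
      using assms mult_right_mono[of c "1 / 100" "c^2"] by (simp add: power2_eq_square power3_eq_cube)
    moreover have "(1 + c) * (1 + c + c^2 / 2) = 1 + 2 * c + 3 / 2 * c^2 + 1 / 2 * c^3"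
      by (simp add: field_simps power2_eq_square power3_eq_cube)
    moreover have "(1 + c)^2 = 1 + 2 * c + c^2"
      by (simp add: power2_eq_square algebra_simps)
    ultimately show ?thesis
      by linarith
  qed
  finally have lower: "99 / 200 * c^2 \<le> hfun c * y^2" .
  have "y^2 \<le> (51 / 50)^2"
    unfolding y_def using assms real_exp_bound_lemma[of c] by (intro power_mono) auto
  then have "13 / 30 * c^2 * y^2 \<le> 13 / 30 * c^2 * (51 / 50)^2"
    by (intro mult_left_mono) auto
  also have "\<dots> \<le> 99 / 200 * c^2"
    using zero_le_power2[of c] by (simp add: power_divide)
  also note lower
  finally show ?thesis
    using \<open>0 < y\<close> by simp
qed

lemma variance_bins_ge2_approx:
  assumes "4 \<le> N" "m \<le> N"
  shows "\<bar>measure_pmf.variance (balls_bins m N) (bins_ge2 m N) - hfun (m / N) * N\<bar> \<le> 300"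
  using variance_formula_approx[of "real N" m] assms by (simp add: variance_bins_ge2)

lemma variance_bins_ge2_lower_bound:
  assumes "4 \<le> N" "real m / N \<le> 1 / 100" "3000 \<le> (real m / N)^2 * N"
  shows "1 / 3 * (real m / N)^2 * N \<le> measure_pmf.variance (balls_bins m N) (bins_ge2 m N)"
proof -
  have "m \<le> N"
    using assms by (simp add: field_simps)
  have "13 / 30 * (real m / N)^2 * N \<le> hfun (m / N) * N"
    using hfun_lower_bound[of "m / N"] assms by (intro mult_right_mono) auto
  then show ?thesis
    using variance_bins_ge2_approx[OF assms(1) \<open>m \<le> N\<close>] assms(3) by (simp add: abs_le_iff)
qed

lemma eventually_density_squared_times_ge:
  fixes m :: "nat \<Rightarrow> nat"
  assumes "(\<lambda>N. real (m N)) \<in> \<Omega>(\<lambda>N. real N)"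
  shows "\<forall>\<^sub>F N in at_top. K \<le> (real (m N) / N)^2 * N"
proof -
  obtain d where "d > 0" and linear: "\<forall>\<^sub>F N in at_top. d * real N \<le> real (m N)"
    using assms by (auto elim!: landau_omega.bigE)
  show ?thesis
    using linear eventually_ge_at_top[of "nat \<lceil>K / d^2\<rceil> + 1"]
  proof eventually_elim
    case (elim N)
    then have "K / d^2 \<le> real N" "0 < real N"
      using real_nat_ceiling_ge[of "K / d^2"] by linarith+
    then have "K \<le> d^2 * N"
      using \<open>d > 0\<close> by (simp add: field_simps)
    moreover have "d \<le> real (m N) / N"
      using elim(1) \<open>0 < real N\<close> by (simp add: field_simps)
    then have "d^2 * N \<le> (real (m N) / N)^2 * N"
      using \<open>d > 0\<close> by (intro mult_right_mono power_mono) auto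
    ultimately show ?case
      by linarith
  qed
qed

theorem lemma6p3:
  fixes m :: "nat \<Rightarrow> nat"
  assumes "(\<lambda>N. real (m N)) \<in> \<Theta>(\<lambda>N. real N)"
    and "\<forall>\<^sub>F N in at_top. 0 < m N \<and> real (m N) / real N < 1 / 100"
  shows "(\<lambda>N. measure_pmf.variance (balls_bins (m N) N) (bins_ge2 (m N) N)
              - hfun (real (m N) / real N) * real N) \<in> O(\<lambda>_. 1)
       \<and> (\<forall>\<^sub>F N in at_top. measure_pmf.variance (balls_bins (m N) N) (bins_ge2 (m N) N)
              \<ge> 1 / 3 * (real (m N) / real N)^2 * real N)"
proof
  have sparse: "\<forall>\<^sub>F N in at_top. 4 \<le> N \<and> real (m N) / N \<le> 1 / 100 \<and> m N \<le> N"
    using assms(2) eventually_ge_at_top[of 4] by eventually_elim (auto simp: field_simps)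
  then show "(\<lambda>N. measure_pmf.variance (balls_bins (m N) N) (bins_ge2 (m N) N)
      - hfun (real (m N) / real N) * real N) \<in> O(\<lambda>_. 1)"
    by (intro landau_o.bigI[of 300]) (auto elim!: eventually_mono intro: variance_bins_ge2_approx)
  have "\<forall>\<^sub>F N in at_top. 3000 \<le> (real (m N) / N)^2 * N"
    using assms(1) by (intro eventually_density_squared_times_ge) (simp add: bigtheta_def)
  with sparse show "\<forall>\<^sub>F N in at_top. measure_pmf.variance (balls_bins (m N) N) (bins_ge2 (m N) N)
      \<ge> 1 / 3 * (real (m N) / real N)^2 * real N"
    by eventually_elim (blast intro: variance_bins_ge2_lower_bound)
qed

end
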